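(* Every random context language can be generated by a limited random context grammar (without erasing productions).
   Context: For an alphabet $V$, $V^+=V^*-\{\lambda\}$, and $\mathit{alph}(w)$ is the set of symbols occurring in $w$. A random context grammar is a quadruple $G=(N,T,P,S)$ where $N$ and $T$ are disjoint finite alphabets of nonterminals and terminals, $V=N\cup T$, $S\in N$, and $P$ is a finite set of productions $(A\to x,\mathit{Per},\mathit{For})$ with $A\in N$, $x\in V^+$ (no erasing productions), $\mathit{Per},\mathit{For}\subseteq N$. For $u,v\in V^*$, $uAv\Rightarrow uxv$ holds if $\mathit{Per}\subseteq\mathit{alph}(uv)$ and $\mathit{alph}(uv)\cap\mathit{For}=\emptyset$. $L(G)=\{w\in T^*:S\Rightarrow^*w\}$. A random context language is a language generated by some random context grammar. A random context grammar is production-limited if every production has one of the forms $(A\to BC,\mathit{Per},\mathit{For})$, $(A\to B,\mathit{Per},\mathit{For})$, or $(A\to a,\emptyset,\emptyset)$, where $A,B,C\in N$, $a\in T$, $\mathit{Per},\mathit{For}\subseteq N$. It is limited if it is production-limited and, in addition, every set $\mathit{Per}$ and $\mathit{For}$ occurring in its productions is either empty or a one-element set. *)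

theory Defs
  imports Main
begin

text \<open>Symbols: Inl A is the nonterminal A, Inr a is the terminal a
  (so N and T are disjoint by construction).\<close>
type_synonym ('n,'t) sym = "'n + 't"

text \<open>A production (A -> x, Per, For).\<close>
type_synonym ('n,'t) prod = "'n \<times> ('n,'t) sym list \<times> 'n set \<times> 'n set"

type_synonym ('n,'t) rcg = "'n set \<times> 't set \<times> ('n,'t) prod set \<times> 'n"

definition nts_of :: "('n,'t) rcg \<Rightarrow> 'n set" where "nts_of G = fst G"
definition tms_of :: "('n,'t) rcg \<Rightarrow> 't set" where "tms_of G = fst (snd G)"
definition prods_of :: "('n,'t) rcg \<Rightarrow> ('n,'t) prod set" where "prods_of G = fst (snd (snd G))"
definition start_of :: "('n,'t) rcg \<Rightarrow> 'n" where "start_of G = snd (snd (snd G))"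

definition syms_of :: "('n,'t) rcg \<Rightarrow> ('n,'t) sym set" where
  "syms_of G = Inl ` nts_of G \<union> Inr ` tms_of G"

definition random_context_grammar :: "('n,'t) rcg \<Rightarrow> bool" where
  "random_context_grammar G \<longleftrightarrow>
     finite (nts_of G) \<and> finite (tms_of G) \<and> finite (prods_of G) \<and>
     start_of G \<in> nts_of G \<and>
     (\<forall>(A, x, Per, For) \<in> prods_of G.
        A \<in> nts_of G \<and> x \<noteq> [] \<and> set x \<subseteq> syms_of G \<and>
        Per \<subseteq> nts_of G \<and> For \<subseteq> nts_of G)"

text \<open>Nonterminals occurring in a word (alph(w) restricted to N; Per and For are sets of
  nonterminals, so this is equivalent to using alph).\<close>
definition alph_N :: "('n,'t) sym list \<Rightarrow> 'n set" where
  "alph_N w = {A. Inl A \<in> set w}"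

definition derive_step :: "('n,'t) rcg \<Rightarrow> ('n,'t) sym list \<Rightarrow> ('n,'t) sym list \<Rightarrow> bool" where
  "derive_step G w w' \<longleftrightarrow>
     (\<exists>u v A x Per For. (A, x, Per, For) \<in> prods_of G \<and>
        w = u @ [Inl A] @ v \<and> w' = u @ x @ v \<and>
        Per \<subseteq> alph_N (u @ v) \<and> alph_N (u @ v) \<inter> For = {})"

definition Lang :: "('n,'t) rcg \<Rightarrow> 't list set" where
  "Lang G = {w. set w \<subseteq> tms_of G \<and> (derive_step G)\<^sup>*\<^sup>* [Inl (start_of G)] (map Inr w)}"

definition production_limited :: "('n,'t) rcg \<Rightarrow> bool" where
  "production_limited G \<longleftrightarrow>
     (\<forall>(A, x, Per, For) \<in> prods_of G.
        (\<exists>B C. x = [Inl B, Inl C]) \<or> (\<exists>B. x = [Inl B]) \<or>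
        (\<exists>a. x = [Inr a] \<and> Per = {} \<and> For = {}))"

definition limited :: "('n,'t) rcg \<Rightarrow> bool" where
  "limited G \<longleftrightarrow> production_limited G \<and>
     (\<forall>(A, x, Per, For) \<in> prods_of G.
        (Per = {} \<or> (\<exists>X. Per = {X})) \<and> (For = {} \<or> (\<exists>X. For = {X})))"

end

theory Submission
  imports Defs
begin

text \<open>Given a well-formed grammar G we construct a limited grammar lgrammar G in which all
  activity takes place at a single head symbol: the remaining symbols of the simulated
  sentential form are kept as passive copies, the head travels between positions by a
  four-step exchange whose random context conditions use single nonterminals only, and a
  production of G is applied at the head by testing its permitting and forbidding symbols
  one at a time against the passive copies and then writing out its right-hand side one
  symbol at a time.

  The theorem follows by renaming the
  finitely many new nonterminals into nat.\<close>

lemma alph_N_Nil [simp]: "alph_N [] = {}"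
  by (simp add: alph_N_def)

lemma alph_N_append [simp]: "alph_N (u @ v) = alph_N u \<union> alph_N v"
  by (auto simp: alph_N_def)

lemma alph_N_Cons_Inl [simp]: "alph_N (Inl A # w) = insert A (alph_N w)"
  by (auto simp: alph_N_def)

lemma alph_N_Cons_Inr [simp]: "alph_N (Inr a # w) = alph_N w"
  by (auto simp: alph_N_def)

lemma derive_stepI:
  assumes "(A, x, Pe, Fo) \<in> prods_of G" "Pe \<subseteq> alph_N (u @ v)" "alph_N (u @ v) \<inter> Fo = {}"
  shows "derive_step G (u @ [Inl A] @ v) (u @ x @ v)"
  using assms unfolding derive_step_def by blast

lemma rcg_prod:
  assumes "random_context_grammar G" "(A, x, Pe, Fo) \<in> prods_of G"
  shows "A \<in> nts_of G \<and> x \<noteq> [] \<and> set x \<subseteq> syms_of G \<and> Pe \<subseteq> nts_of G \<and> Fo \<subseteq> nts_of G"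
  using assms unfolding random_context_grammar_def by fast

lemma derives_syms:
  assumes G: "random_context_grammar G"
    and d: "(derive_step G)\<^sup>*\<^sup>* w w'" and w: "set w \<subseteq> syms_of G"
  shows "set w' \<subseteq> syms_of G"
  using d w
proof induction
  case (step y z)
  then show ?case
    by (auto simp: derive_step_def dest!: rcg_prod[OF G])
qed simp

lemma start_derives_syms:
  assumes G: "random_context_grammar G" and d: "(derive_step G)\<^sup>*\<^sup>* [Inl (start_of G)] w"
  shows "set w \<subseteq> syms_of G"
  using derives_syms[OF G d] G by (simp add: random_context_grammar_def syms_of_def)

text \<open>This is only needed to
  move the constructed grammar onto the nonterminal type required by the theorem.\<close>

fun ren_prod :: "('a \<Rightarrow> 'b) \<Rightarrow> ('a,'t) prod \<Rightarrow> ('b,'t) prod" where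
  "ren_prod f (A, x, Pe, Fo) = (f A, map (map_sum f id) x, f ` Pe, f ` Fo)"

definition ren :: "('a \<Rightarrow> 'b) \<Rightarrow> ('a,'t) rcg \<Rightarrow> ('b,'t) rcg" where
  "ren f G = (f ` nts_of G, tms_of G, ren_prod f ` prods_of G, f (start_of G))"

lemma ren_simps [simp]:
  "nts_of (ren f G) = f ` nts_of G" "tms_of (ren f G) = tms_of G"
  "prods_of (ren f G) = ren_prod f ` prods_of G" "start_of (ren f G) = f (start_of G)"
  by (simp_all add: ren_def nts_of_def tms_of_def prods_of_def start_of_def)

lemma alph_N_map [simp]: "alph_N (map (map_sum f id) w) = f ` alph_N w"
proof (induction w)
  case (Cons s w) then show ?case by (cases s) auto
qed simp

lemma syms_of_ren: "syms_of (ren f G) = map_sum f id ` syms_of G"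
  unfolding syms_of_def by (simp add: image_Un image_image)

lemma ren_rcg:
  assumes G: "random_context_grammar G"
  shows "random_context_grammar (ren f G)"
  using G unfolding random_context_grammar_def
  by (fastforce dest: rcg_prod[OF G] simp: syms_of_ren)

lemma ren_limited:
  assumes "limited G" shows "limited (ren f G)"
  using assms unfolding limited_def production_limited_def by fastforce

lemma ren_ren:
  assumes G: "random_context_grammar G" and inj: "inj_on f (nts_of G)"
  shows "ren (inv_into (nts_of G) f) (ren f G) = G"
proof -
  let ?g = "inv_into (nts_of G) f"
  have set_id: "?g ` f ` S = S" if "S \<subseteq> nts_of G" for S
    using inv_into_image_cancel[OF inj that] .
  have word_id: "map (map_sum ?g id \<circ> map_sum f id) x = x" if "set x \<subseteq> syms_of G" for x
    using that by (induction x) (auto simp: syms_of_def inv_into_f_f[OF inj])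
  have "ren_prod ?g (ren_prod f p) = p" if "p \<in> prods_of G" for p
    using that by (cases p) (auto dest!: rcg_prod[OF G] simp: inv_into_f_f[OF inj] set_id word_id)
  then have "ren_prod ?g ` ren_prod f ` prods_of G = prods_of G"
    unfolding image_image by (simp cong: image_cong)
  moreover have "start_of G \<in> nts_of G" using G by (simp add: random_context_grammar_def)
  moreover have "G = (nts_of G, tms_of G, prods_of G, start_of G)"
    by (simp add: nts_of_def tms_of_def prods_of_def start_of_def)
  ultimately show ?thesis
    unfolding ren_def[of ?g] ren_simps by (simp add: set_id inv_into_f_f[OF inj])
qed

text \<open>A renaming injective on N maps each derivation step to a derivation step: injectivity
  is what keeps the forbidding condition intact.\<close>

lemma ren_step:
  assumes G: "random_context_grammar G" and inj: "inj_on f (nts_of G)"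
    and st: "derive_step G w w'" and w: "set w \<subseteq> syms_of G"
  shows "derive_step (ren f G) (map (map_sum f id) w) (map (map_sum f id) w')"
proof -
  from st obtain u v A x Pe Fo where p: "(A, x, Pe, Fo) \<in> prods_of G"
    and ww': "w = u @ [Inl A] @ v" "w' = u @ x @ v"
    and per: "Pe \<subseteq> alph_N (u @ v)" and forb: "alph_N (u @ v) \<inter> Fo = {}"
    unfolding derive_step_def by blast
  let ?h = "map (map_sum f id)"
  have uv: "alph_N (?h u @ ?h v) = f ` alph_N (u @ v)"
    by (simp add: image_Un)
  have "alph_N (u @ v) \<subseteq> nts_of G" using w ww' by (auto simp: alph_N_def syms_of_def)
  moreover have "Fo \<subseteq> nts_of G" using rcg_prod[OF G p] by blast
  ultimately have "alph_N (?h u @ ?h v) \<inter> f ` Fo = {}"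
    unfolding uv using forb inj_on_image_Int[OF inj] by (metis image_empty)
  moreover have "(f A, ?h x, f ` Pe, f ` Fo) \<in> prods_of (ren f G)"
    using imageI[OF p, of "ren_prod f"] by simp
  moreover have "f ` Pe \<subseteq> alph_N (?h u @ ?h v)"
    unfolding uv using per by (rule image_mono)
  ultimately have "derive_step (ren f G) (?h u @ [Inl (f A)] @ ?h v) (?h u @ ?h x @ ?h v)"
    by (intro derive_stepI)
  then show ?thesis by (simp add: ww')
qed

lemma ren_derives:
  assumes G: "random_context_grammar G" and inj: "inj_on f (nts_of G)"
    and d: "(derive_step G)\<^sup>*\<^sup>* w w'" and w: "set w \<subseteq> syms_of G"
  shows "(derive_step (ren f G))\<^sup>*\<^sup>* (map (map_sum f id) w) (map (map_sum f id) w')"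
  using d
proof induction
  case (step y z)
  then show ?case
    using ren_step[OF G inj _ derives_syms[OF G _ w]] by (meson rtranclp.rtrancl_into_rtrancl)
qed simp

lemma Lang_ren_mono:
  assumes G: "random_context_grammar G" and inj: "inj_on f (nts_of G)"
  shows "Lang G \<subseteq> Lang (ren f G)"
proof
  fix t assume "t \<in> Lang G"
  then have t: "set t \<subseteq> tms_of G" and d: "(derive_step G)\<^sup>*\<^sup>* [Inl (start_of G)] (map Inr t)"
    unfolding Lang_def by auto
  have "set [Inl (start_of G)] \<subseteq> syms_of G"
    using G by (simp add: random_context_grammar_def syms_of_def)
  from ren_derives[OF G inj d this] t show "t \<in> Lang (ren f G)"
    unfolding Lang_def by (simp add: comp_def)
qed

text \<open>The reverse inclusion is the forward one applied to the inverse renaming.\<close>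

lemma Lang_ren:
  assumes G: "random_context_grammar G" and inj: "inj_on f (nts_of G)"
  shows "Lang (ren f G) = Lang G"
proof
  show "Lang G \<subseteq> Lang (ren f G)" using Lang_ren_mono[OF G inj] .
  have "inj_on (inv_into (nts_of G) f) (nts_of (ren f G))"
    by (simp add: inj_on_inv_into)
  from Lang_ren_mono[OF ren_rcg[OF G] this] show "Lang (ren f G) \<subseteq> Lang G"
    unfolding ren_ren[OF G inj] .
qed

text \<open>A sentential form X1 ... Xn of G is represented by a word with one
  distinguished position, the head, carrying the symbol Head Xi, while all other positions carry
  the passive copies Pas Xj.  The head travels to an arbitrary position in four steps that use
  the marker pairs Give X Y / Take Y X, and at a nonterminal A it simulates a production
  p = (A, x, Per, For): Check p P F tests the permitting symbols in P and the forbidding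
  symbols in F one at a time against the passive copies, after which Expand p i writes out
  the right-hand side x from its i-th symbol on, the last symbol of x becoming the new head.\<close>

datatype ('n,'t) lnt =
    Pas "('n,'t) sym"
  | Head "('n,'t) sym"
  | Give "('n,'t) sym" "('n,'t) sym"
  | Take "('n,'t) sym" "('n,'t) sym"
  | Check "('n,'t) prod" "'n set" "'n set"
  | Expand "('n,'t) prod" nat

definition rhs :: "('n,'t) prod \<Rightarrow> ('n,'t) sym list" where "rhs p = fst (snd p)"
definition per :: "('n,'t) prod \<Rightarrow> 'n set" where "per p = fst (snd (snd p))"
definition forb :: "('n,'t) prod \<Rightarrow> 'n set" where "forb p = snd (snd (snd p))"

lemma prod_sel [simp]: "rhs (A, x, Pe, Fo) = x" "per (A, x, Pe, Fo) = Pe" "forb (A, x, Pe, Fo) = Fo"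
  by (simp_all add: rhs_def per_def forb_def)

inductive_set lprods :: "('n,'t) rcg \<Rightarrow> (('n,'t) lnt, 't) prod set" for G where
  give: "X \<in> syms_of G \<Longrightarrow> Y \<in> syms_of G \<Longrightarrow> (Head X, [Inl (Give X Y)], {}, {}) \<in> lprods G"
| take: "X \<in> syms_of G \<Longrightarrow> Y \<in> syms_of G \<Longrightarrow>
    (Pas Y, [Inl (Take Y X)], {Give X Y}, {Take Y X}) \<in> lprods G"
| release: "X \<in> syms_of G \<Longrightarrow> Y \<in> syms_of G \<Longrightarrow>
    (Give X Y, [Inl (Pas X)], {Take Y X}, {}) \<in> lprods G"
| acquire: "X \<in> syms_of G \<Longrightarrow> Y \<in> syms_of G \<Longrightarrow>
    (Take Y X, [Inl (Head Y)], {}, {Give X Y}) \<in> lprods G"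
| start: "p \<in> prods_of G \<Longrightarrow> (Head (Inl (fst p)), [Inl (Check p (per p) (forb p))], {}, {}) \<in> lprods G"
| check_per: "p \<in> prods_of G \<Longrightarrow> P' \<subseteq> per p \<Longrightarrow> F' \<subseteq> forb p \<Longrightarrow> B \<in> P' \<Longrightarrow>
    (Check p P' F', [Inl (Check p (P' - {B}) F')], {Pas (Inl B)}, {}) \<in> lprods G"
| check_forb: "p \<in> prods_of G \<Longrightarrow> P' \<subseteq> per p \<Longrightarrow> F' \<subseteq> forb p \<Longrightarrow> C \<in> F' \<Longrightarrow>
    (Check p P' F', [Inl (Check p P' (F' - {C}))], {}, {Pas (Inl C)}) \<in> lprods G"
| fire: "p \<in> prods_of G \<Longrightarrow> (Check p {} {}, [Inl (Expand p 0)], {}, {}) \<in> lprods G"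
| expand: "p \<in> prods_of G \<Longrightarrow> Suc i < length (rhs p) \<Longrightarrow>
    (Expand p i, [Inl (Pas (rhs p ! i)), Inl (Expand p (Suc i))], {}, {}) \<in> lprods G"
| expand_last: "p \<in> prods_of G \<Longrightarrow> Suc i = length (rhs p) \<Longrightarrow>
    (Expand p i, [Inl (Head (rhs p ! i))], {}, {}) \<in> lprods G"
| term_head: "a \<in> tms_of G \<Longrightarrow> (Head (Inr a), [Inr a], {}, {}) \<in> lprods G"
| term_pas: "a \<in> tms_of G \<Longrightarrow> (Pas (Inr a), [Inr a], {}, {}) \<in> lprods G"

definition lnts :: "('n,'t) rcg \<Rightarrow> ('n,'t) lnt set" where
  "lnts G = Pas ` syms_of G \<union> Head ` syms_of G
     \<union> case_prod Give ` (syms_of G \<times> syms_of G) \<union> case_prod Take ` (syms_of G \<times> syms_of G)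
     \<union> (\<lambda>(p, P', F'). Check p P' F') ` (SIGMA p : prods_of G. Pow (per p) \<times> Pow (forb p))
     \<union> case_prod Expand ` (SIGMA p : prods_of G. {..<length (rhs p)})"

definition lgrammar :: "('n,'t) rcg \<Rightarrow> (('n,'t) lnt, 't) rcg" where
  "lgrammar G = (lnts G, tms_of G, lprods G, Head (Inl (start_of G)))"

lemma lgrammar_simps [simp]:
  "nts_of (lgrammar G) = lnts G" "tms_of (lgrammar G) = tms_of G"
  "prods_of (lgrammar G) = lprods G" "start_of (lgrammar G) = Head (Inl (start_of G))"
  by (simp_all add: lgrammar_def nts_of_def tms_of_def prods_of_def start_of_def)

lemma lprods_limited_shape:
  assumes "(A, x, Pe, Fo) \<in> lprods G"
  shows "((\<exists>B C. x = [Inl B, Inl C]) \<or> (\<exists>B. x = [Inl B]) \<or> (\<exists>a. x = [Inr a] \<and> Pe = {} \<and> Fo = {})) \<and>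
    (Pe = {} \<or> (\<exists>X. Pe = {X})) \<and> (Fo = {} \<or> (\<exists>X. Fo = {X}))"
  using assms by cases auto

lemma lnts_intros:
  "X \<in> syms_of G \<Longrightarrow> Pas X \<in> lnts G"
  "X \<in> syms_of G \<Longrightarrow> Head X \<in> lnts G"
  "X \<in> syms_of G \<Longrightarrow> Y \<in> syms_of G \<Longrightarrow> Give X Y \<in> lnts G"
  "X \<in> syms_of G \<Longrightarrow> Y \<in> syms_of G \<Longrightarrow> Take X Y \<in> lnts G"
  "p \<in> prods_of G \<Longrightarrow> P' \<subseteq> per p \<Longrightarrow> F' \<subseteq> forb p \<Longrightarrow> Check p P' F' \<in> lnts G"
  "p \<in> prods_of G \<Longrightarrow> i < length (rhs p) \<Longrightarrow> Expand p i \<in> lnts G"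
  unfolding lnts_def
  by (auto intro: rev_image_eqI[of "(X, Y)"] rev_image_eqI[of "(p, P', F')"] rev_image_eqI[of "(p, i)"])

lemma lprods_in_lnts:
  assumes G: "random_context_grammar G" and p: "(A, x, Pe, Fo) \<in> lprods G"
  shows "A \<in> lnts G \<and> set x \<subseteq> syms_of (lgrammar G) \<and> Pe \<subseteq> lnts G \<and> Fo \<subseteq> lnts G"
proof -
  have wf: "fst q \<in> nts_of G" "rhs q \<noteq> []" "set (rhs q) \<subseteq> syms_of G"
      "per q \<subseteq> nts_of G" "forb q \<subseteq> nts_of G" if "q \<in> prods_of G" for q
    using rcg_prod[OF G, of "fst q" "rhs q" "per q" "forb q"] that by (cases q; simp)+
  have rhs_sym: "rhs q ! i \<in> syms_of G" if "q \<in> prods_of G" "i < length (rhs q)" for q i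
    using wf(3)[OF that(1)] nth_mem[OF that(2)] by blast
  from p show ?thesis
  proof cases
    case (check_per q P' F' B)
    then have "B \<in> nts_of G" using wf(4) by blast
    with check_per show ?thesis by (auto simp: syms_of_def intro!: imageI lnts_intros)
  next
    case (check_forb q P' F' C)
    then have "C \<in> nts_of G" using wf(5) by blast
    with check_forb show ?thesis by (auto simp: syms_of_def intro!: imageI lnts_intros)
  next
    case (expand q i)
    then have "rhs q ! i \<in> syms_of G" using rhs_sym by simp
    with expand show ?thesis by (auto simp: syms_of_def intro!: imageI lnts_intros)
  next
    case (expand_last q i)
    then have "rhs q ! i \<in> syms_of G" using rhs_sym by simp
    with expand_last show ?thesis by (auto simp: syms_of_def intro!: imageI lnts_intros)
  qed (auto simp: syms_of_def intro!: imageI lnts_intros dest: wf)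
qed

lemma lprods_length:
  assumes "(A, x, Pe, Fo) \<in> lprods G"
  shows "x \<noteq> [] \<and> length x \<le> 2"
  using lprods_limited_shape[OF assms] by auto

text \<open>The constructed grammar is a well-formed random context grammar; finiteness of the
  productions follows because they are built from finitely many nonterminals and have
  right-hand sides of length at most two.\<close>

lemma lgrammar_rcg:
  assumes G: "random_context_grammar G"
  shows "random_context_grammar (lgrammar G)"
proof -
  have fin_syms: "finite (syms_of G)"
    using G by (simp add: random_context_grammar_def syms_of_def)
  have fin_P: "finite (prods_of G)" and fin_N: "finite (nts_of G)"
    using G by (simp_all add: random_context_grammar_def)
  have "finite (Pow (per p) \<times> Pow (forb p))" if "p \<in> prods_of G" for p
    using rcg_prod[OF G, of "fst p" "rhs p" "per p" "forb p"] that fin_N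
    by (cases p) (auto intro: finite_subset)
  then have fin_lnts: "finite (lnts G)"
    unfolding lnts_def using fin_syms fin_P by (auto intro!: finite_SigmaI)
  have fin_syms': "finite (syms_of (lgrammar G))"
    using fin_lnts G by (simp add: syms_of_def random_context_grammar_def)
  have prod_wf: "A \<in> lnts G \<and> length x \<le> 2 \<and> x \<noteq> [] \<and> set x \<subseteq> syms_of (lgrammar G) \<and>
      Pe \<subseteq> lnts G \<and> Fo \<subseteq> lnts G"
    if "(A, x, Pe, Fo) \<in> lprods G" for A x Pe Fo
    using lprods_in_lnts[OF G that] lprods_length[OF that] by blast
  have "lprods G \<subseteq> lnts G \<times> {x. set x \<subseteq> syms_of (lgrammar G) \<and> length x \<le> 2}
      \<times> Pow (lnts G) \<times> Pow (lnts G)"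
    using prod_wf by fast
  moreover have "finite \<dots>"
    using fin_lnts finite_lists_length_le[OF fin_syms'] by blast
  ultimately have "finite (lprods G)" by (rule finite_subset)
  moreover have "Head (Inl (start_of G)) \<in> lnts G"
    using G by (simp add: lnts_def syms_of_def random_context_grammar_def)
  moreover have "\<forall>(A, x, Pe, Fo) \<in> lprods G. A \<in> lnts G \<and> x \<noteq> [] \<and>
      set x \<subseteq> syms_of (lgrammar G) \<and> Pe \<subseteq> lnts G \<and> Fo \<subseteq> lnts G"
    using prod_wf by fast
  ultimately show ?thesis
    using fin_lnts G unfolding random_context_grammar_def by simp
qed

lemma lgrammar_limited: "limited (lgrammar G)"
proof -
  have "\<forall>(A, x, Pe, Fo) \<in> lprods G.
      ((\<exists>B C. x = [Inl B, Inl C]) \<or> (\<exists>B. x = [Inl B]) \<or> (\<exists>a. x = [Inr a] \<and> Pe = {} \<and> Fo = {})) \<and>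
      (Pe = {} \<or> (\<exists>X. Pe = {X})) \<and> (Fo = {} \<or> (\<exists>X. Fo = {X}))"
    using lprods_limited_shape by fast
  then show ?thesis
    unfolding limited_def production_limited_def lgrammar_simps
    by (simp add: ball_conj_distrib[symmetric] split_def)
qed

text \<open>Soundness.  Each word of the constructed grammar encodes a sentential form of G, obtained
  by reading every symbol as the part of the original word it stands for.\<close>

fun restore_nt :: "('n,'t) lnt \<Rightarrow> ('n,'t) sym list" where
  "restore_nt (Pas X) = [X]"
| "restore_nt (Head X) = [X]"
| "restore_nt (Give X Y) = [X]"
| "restore_nt (Take Y X) = [Y]"
| "restore_nt (Check p P' F') = [Inl (fst p)]"
| "restore_nt (Expand p i) = drop i (rhs p)"

fun restore_sym :: "(('n,'t) lnt, 't) sym \<Rightarrow> ('n,'t) sym list" where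
  "restore_sym (Inl k) = restore_nt k"
| "restore_sym (Inr a) = [Inr a]"

definition restore :: "(('n,'t) lnt, 't) sym list \<Rightarrow> ('n,'t) sym list" where
  "restore w = concat (map restore_sym w)"

lemma restore_simps [simp]:
  "restore [] = []" "restore (s # w) = restore_sym s @ restore w"
  "restore (u @ v) = restore u @ restore v"
  by (simp_all add: restore_def)

lemma restore_terminals [simp]: "restore (map Inr t) = map Inr t"
  by (induction t) auto

fun active :: "(('n,'t) lnt, 't) sym \<Rightarrow> bool" where
  "active (Inl (Pas X)) = False"
| "active (Inr a) = False"
| "active (Inl _) = True"

definition passive_nts :: "(('n,'t) lnt, 't) sym list \<Rightarrow> 'n set" where
  "passive_nts w = {B. Inl (Pas (Inl B)) \<in> set w}"

lemma passive_nts_simps [simp]: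
  "passive_nts [] = {}" "passive_nts (u @ v) = passive_nts u \<union> passive_nts v"
  "passive_nts (Inl (Pas (Inl B)) # w) = insert B (passive_nts w)"
  "passive_nts (Inl (Pas (Inr a)) # w) = passive_nts w"
  "passive_nts (Inr a # w) = passive_nts w"
  "passive_nts (Inl (Head X) # w) = passive_nts w"
  "passive_nts (Inl (Give X Y) # w) = passive_nts w"
  "passive_nts (Inl (Take X Y) # w) = passive_nts w"
  "passive_nts (Inl (Check p P' F') # w) = passive_nts w"
  "passive_nts (Inl (Expand p i) # w) = passive_nts w"
  by (auto simp: passive_nts_def)

lemma alph_N_restore_passive:
  "filter active w = [] \<Longrightarrow> alph_N (restore w) = passive_nts w"
proof (induction w)
  case (Cons s w)
  then obtain X where "s = Inl (Pas X) \<or> (\<exists>a. s = Inr a)"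
    by (cases s rule: active.cases) auto
  with Cons show ?case by (cases X) auto
qed simp

text \<open>The possible sequences of active symbols occurring along a derivation: at most one control
  symbol, or a matching Give/Take pair in the middle of a head move.  A Check symbol records
  that the permitting symbols already tested are present and the forbidding ones absent.\<close>

definition active_shape :: "(('n,'t) lnt, 't) sym list \<Rightarrow> 'n set \<Rightarrow> bool" where
  "active_shape a pn \<longleftrightarrow> a = [] \<or> (\<exists>X. a = [Inl (Head X)]) \<or>
     (\<exists>X Y. a = [Inl (Give X Y)]) \<or> (\<exists>X Y. a = [Inl (Take Y X)]) \<or>
     (\<exists>X Y. a = [Inl (Give X Y), Inl (Take Y X)]) \<or> (\<exists>X Y. a = [Inl (Take Y X), Inl (Give X Y)]) \<or>
     (\<exists>p P' F'. a = [Inl (Check p P' F')] \<and> per p - P' \<subseteq> pn \<and> (forb p - F') \<inter> pn = {}) \<or>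
     (\<exists>p i. a = [Inl (Expand p i)])"

definition sound_inv :: "('n,'t) rcg \<Rightarrow> (('n,'t) lnt, 't) sym list \<Rightarrow> bool" where
  "sound_inv G w \<longleftrightarrow> (derive_step G)\<^sup>*\<^sup>* [Inl (start_of G)] (restore w) \<and>
     active_shape (filter active w) (passive_nts w)"

lemma active_shape_simps [simp]:
  "active_shape [] pn" "active_shape [Inl (Head X)] pn" "active_shape [Inl (Expand p i)] pn"
  "active_shape [Inl (Give X Y)] pn" "active_shape [Inl (Take Y X)] pn"
  unfolding active_shape_def by blast+

lemma append_Cons_eq_singleton: "(u @ c # v = [d]) = (u = [] \<and> v = [] \<and> c = d)"
  by (cases u) auto

lemma append_Cons_eq_pair:
  "(u @ c # v = [d1, d2]) = ((u = [] \<and> c = d1 \<and> v = [d2]) \<or> (u = [d1] \<and> c = d2 \<and> v = []))"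
  by (cases u) (auto simp: append_Cons_eq_singleton)

lemma active_mem: "active (Inl k) \<Longrightarrow> (k \<in> alph_N w) = (Inl k \<in> set (filter active w))"
  by (auto simp: alph_N_def)

lemma shape_take:
  "active_shape a pn \<Longrightarrow> Inl (Give X Y) \<in> set a \<Longrightarrow> Inl (Take Y X) \<notin> set a \<Longrightarrow> a = [Inl (Give X Y)]"
  unfolding active_shape_def by auto

lemma shape_release:
  "active_shape (u @ Inl (Give X Y) # v) pn \<Longrightarrow> Inl (Take Y X) \<in> set (u @ v) \<Longrightarrow> u @ v = [Inl (Take Y X)]"
  unfolding active_shape_def by (auto simp: append_Cons_eq_singleton append_Cons_eq_pair)

lemma shape_acquire:
  "active_shape (u @ Inl (Take Y X) # v) pn \<Longrightarrow> Inl (Give X Y) \<notin> set (u @ v) \<Longrightarrow> u = [] \<and> v = []"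
  unfolding active_shape_def by (auto simp: append_Cons_eq_singleton append_Cons_eq_pair)

lemma shape_head: "active_shape (u @ Inl (Head X) # v) pn \<Longrightarrow> u = [] \<and> v = []"
  unfolding active_shape_def by (auto simp: append_Cons_eq_singleton append_Cons_eq_pair)

lemma shape_expand: "active_shape (u @ Inl (Expand p i) # v) pn \<Longrightarrow> u = [] \<and> v = []"
  unfolding active_shape_def by (auto simp: append_Cons_eq_singleton append_Cons_eq_pair)

lemma shape_check:
  "active_shape (u @ Inl (Check p P' F') # v) pn \<Longrightarrow>
   u = [] \<and> v = [] \<and> per p - P' \<subseteq> pn \<and> (forb p - F') \<inter> pn = {}"
  unfolding active_shape_def by (auto simp: append_Cons_eq_singleton append_Cons_eq_pair)

text \<open>The step Check p {} {} -> Expand p 0 is licensed only when all tests of p have succeeded, so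
  it restores to a genuine application of p in G.\<close>

lemma restore_fire:
  assumes p: "p \<in> prods_of G" and inactive: "filter active (u @ v) = []"
    and per: "per p \<subseteq> passive_nts (u @ v)" and forb: "forb p \<inter> passive_nts (u @ v) = {}"
  shows "derive_step G (restore (u @ [Inl (Check p {} {})] @ v)) (restore (u @ [Inl (Expand p 0)] @ v))"
proof -
  obtain A x Pe Fo where p_eq: "p = (A, x, Pe, Fo)" by (cases p)
  have "alph_N (restore u @ restore v) = passive_nts (u @ v)"
    using alph_N_restore_passive[OF inactive] by simp
  then have "derive_step G (restore u @ [Inl A] @ restore v) (restore u @ x @ restore v)"
    using p per forb by (intro derive_stepI) (auto simp: p_eq)
  then show ?thesis by (simp add: p_eq)
qed

lemma restore_step:
  assumes C0: "active_shape (filter active w) (passive_nts w)"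
    and st: "derive_step (lgrammar G) w w'"
  shows "restore w' = restore w \<or> derive_step G (restore w) (restore w')"
proof -
  from st obtain u v k y Pe Fo where p: "(k, y, Pe, Fo) \<in> lprods G"
    and ww': "w = u @ [Inl k] @ v" "w' = u @ y @ v"
    unfolding derive_step_def lgrammar_simps by blast
  from p show ?thesis
  proof cases
    case (fire p)
    have C: "active_shape (filter active u @ Inl (Check p {} {}) # filter active v) (passive_nts w)"
      using C0 ww' fire by simp
    have "filter active (u @ v) = [] \<and> per p \<subseteq> passive_nts (u @ v) \<and>
        forb p \<inter> passive_nts (u @ v) = {}"
      using shape_check[OF C] ww' fire by auto
    then show ?thesis using restore_fire[OF fire(5)] fire ww' by simp
  next
    case (expand p i)
    then have "drop i (rhs p) = rhs p ! i # drop (Suc i) (rhs p)"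
      by (simp add: Cons_nth_drop_Suc)
    then show ?thesis using expand ww' by simp
  next
    case (expand_last p i)
    then have "drop i (rhs p) = [rhs p ! i]"
      by (metis Cons_nth_drop_Suc drop_all le_refl lessI)
    then show ?thesis using expand_last ww' by simp
  qed (use ww' in simp_all)
qed

text \<open>Admissible shapes are preserved by every step.  The conditions of the Give/Take protocol
  exclude interference of two head moves.\<close>

lemma active_shape_step:
  assumes C0: "active_shape (filter active w) (passive_nts w)"
    and st: "derive_step (lgrammar G) w w'"
  shows "active_shape (filter active w') (passive_nts w')"
proof -
  from st obtain u v k y Pe Fo where p: "(k, y, Pe, Fo) \<in> lprods G"
    and ww': "w = u @ [Inl k] @ v" "w' = u @ y @ v"
    and per: "Pe \<subseteq> alph_N (u @ v)" and forb: "alph_N (u @ v) \<inter> Fo = {}"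
    unfolding derive_step_def lgrammar_simps by blast
  have C: "active_shape (filter active u @ filter active [Inl k] @ filter active v)
      (passive_nts u \<union> passive_nts (Inl k # v))"
    using C0 ww' by (cases "active (Inl k)") simp_all
  have alone: "active_shape (filter active w') (passive_nts w')"
    if "filter active u = [] \<and> filter active v = []" "active_shape (filter active y) (passive_nts w')"
    using that ww' by simp
  from p show ?thesis
  proof cases
    case (give X Y)
    then show ?thesis using C shape_head by (intro alone) simp_all
  next
    case (take X Y)
    have give_present: "Inl (Give X Y) \<in> set (filter active u @ filter active v)"
      using per take active_mem[of "Give X Y" "u @ v"] by simp
    have take_absent: "Inl (Take Y X) \<notin> set (filter active u @ filter active v)"
      using forb take active_mem[of "Take Y X" "u @ v"] by simp
    have "filter active u @ filter active v = [Inl (Give X Y)]"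
      using C take shape_take[OF _ give_present take_absent] by simp
    then show ?thesis using take ww' by (auto simp: active_shape_def append_eq_Cons_conv)
  next
    case (release X Y)
    have take_present: "Inl (Take Y X) \<in> set (filter active u @ filter active v)"
      using per release active_mem[of "Take Y X" "u @ v"] by simp
    have "filter active u @ filter active v = [Inl (Take Y X)]"
      using C release shape_release[OF _ take_present] by simp
    then show ?thesis using release ww' by simp
  next
    case (acquire X Y)
    have give_absent: "Inl (Give X Y) \<notin> set (filter active u @ filter active v)"
      using forb acquire active_mem[of "Give X Y" "u @ v"] by simp
    then show ?thesis using C acquire shape_acquire[OF _ give_absent] by (intro alone) simp_all
  next
    case (start p)
    then show ?thesis using C shape_head by (intro alone) (simp_all add: active_shape_def)
  next
    case (check_per p P' F' B)
    have "B \<in> passive_nts (u @ v)" using per check_per by (auto simp: alph_N_def passive_nts_def)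
    moreover have "filter active u = [] \<and> filter active v = [] \<and>
        per p - P' \<subseteq> passive_nts (u @ v) \<and> (forb p - F') \<inter> passive_nts (u @ v) = {}"
      using C check_per shape_check by simp
    ultimately show ?thesis using check_per ww' by (auto simp: active_shape_def)
  next
    case (check_forb p P' F' E)
    have "E \<notin> passive_nts (u @ v)" using forb check_forb by (auto simp: alph_N_def passive_nts_def)
    moreover have "filter active u = [] \<and> filter active v = [] \<and>
        per p - P' \<subseteq> passive_nts (u @ v) \<and> (forb p - F') \<inter> passive_nts (u @ v) = {}"
      using C check_forb shape_check by simp
    ultimately show ?thesis using check_forb ww' by (auto simp: active_shape_def)
  next
    case (fire p)
    then show ?thesis using C shape_check[of "filter active u" p "{}" "{}"] by (intro alone) simp_all
  next
    case (expand p i)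
    then show ?thesis using C shape_expand by (intro alone) simp_all
  next
    case (expand_last p i)
    then show ?thesis using C shape_expand by (intro alone) simp_all
  next
    case (term_head a)
    then show ?thesis using C shape_head by (intro alone) simp_all
  qed (use C ww' in simp)
qed

lemma sound_inv_step:
  assumes "sound_inv G w" and "derive_step (lgrammar G) w w'"
  shows "sound_inv G w'"
  using assms restore_step[of w G w'] active_shape_step[of w G w']
  unfolding sound_inv_def by (metis rtranclp.rtrancl_into_rtrancl)

lemma lgrammar_sound: "Lang (lgrammar G) \<subseteq> Lang G"
proof
  fix t assume "t \<in> Lang (lgrammar G)"
  then have t: "set t \<subseteq> tms_of G"
    and d: "(derive_step (lgrammar G))\<^sup>*\<^sup>* [Inl (Head (Inl (start_of G)))] (map Inr t)"
    unfolding Lang_def by auto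
  have "sound_inv G [Inl (Head (Inl (start_of G)))]" by (simp add: sound_inv_def)
  with d have "sound_inv G (map Inr t)"
    by induction (auto intro: sound_inv_step)
  with t show "t \<in> Lang G" unfolding sound_inv_def Lang_def by simp
qed

abbreviation passives :: "('n,'t) sym list \<Rightarrow> (('n,'t) lnt, 't) sym list" where
  "passives a \<equiv> map (\<lambda>Z. Inl (Pas Z)) a"

definition headed :: "('n,'t) sym list \<Rightarrow> ('n,'t) sym \<Rightarrow> ('n,'t) sym list \<Rightarrow> (('n,'t) lnt, 't) sym list" where
  "headed a X b = passives a @ [Inl (Head X)] @ passives b"

lemma alph_N_passive [simp]: "alph_N (passives a) = Pas ` set a"
  by (induction a) auto

lemma lstep:
  assumes "(k, y, Pe, Fo) \<in> lprods G" "Pe \<subseteq> alph_N (u @ v)" "alph_N (u @ v) \<inter> Fo = {}"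
    and "s = u @ [Inl k] @ v" "s' = u @ y @ v"
  shows "derive_step (lgrammar G) s s'"
  using derive_stepI[of k y Pe Fo "lgrammar G" u v] assms by simp

lemma jump_right:
  assumes X: "X \<in> syms_of G" and Y: "Y \<in> syms_of G"
  shows "(derive_step (lgrammar G))\<^sup>*\<^sup>* (headed a X (c @ Y # b)) (headed (a @ X # c) Y b)"
proof -
  let ?a = "passives a" and ?b = "passives b" and ?c = "passives c"
  have "derive_step (lgrammar G) (?a @ [Inl (Head X)] @ ?c @ Inl (Pas Y) # ?b)
      (?a @ [Inl (Give X Y)] @ ?c @ Inl (Pas Y) # ?b)"
    by (rule lstep[OF lprods.give[OF X Y], where u = ?a and v = "?c @ Inl (Pas Y) # ?b"]) auto
  moreover have "derive_step (lgrammar G) (?a @ [Inl (Give X Y)] @ ?c @ Inl (Pas Y) # ?b)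
      (?a @ [Inl (Give X Y)] @ ?c @ Inl (Take Y X) # ?b)"
    by (rule lstep[OF lprods.take[OF X Y], where u = "?a @ Inl (Give X Y) # ?c" and v = ?b]) auto
  moreover have "derive_step (lgrammar G) (?a @ [Inl (Give X Y)] @ ?c @ Inl (Take Y X) # ?b)
      (?a @ [Inl (Pas X)] @ ?c @ Inl (Take Y X) # ?b)"
    by (rule lstep[OF lprods.release[OF X Y], where u = ?a and v = "?c @ Inl (Take Y X) # ?b"]) auto
  moreover have "derive_step (lgrammar G) (?a @ [Inl (Pas X)] @ ?c @ Inl (Take Y X) # ?b)
      (?a @ [Inl (Pas X)] @ ?c @ Inl (Head Y) # ?b)"
    by (rule lstep[OF lprods.acquire[OF X Y], where u = "?a @ Inl (Pas X) # ?c" and v = ?b]) auto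
  ultimately show ?thesis
    unfolding headed_def by (simp add: converse_rtranclp_into_rtranclp)
qed

lemma jump_left:
  assumes X: "X \<in> syms_of G" and Y: "Y \<in> syms_of G"
  shows "(derive_step (lgrammar G))\<^sup>*\<^sup>* (headed (a @ Y # c) X b) (headed a Y (c @ X # b))"
proof -
  let ?a = "passives a" and ?b = "passives b" and ?c = "passives c"
  have "derive_step (lgrammar G) (?a @ Inl (Pas Y) # ?c @ [Inl (Head X)] @ ?b)
      (?a @ Inl (Pas Y) # ?c @ [Inl (Give X Y)] @ ?b)"
    by (rule lstep[OF lprods.give[OF X Y], where u = "?a @ Inl (Pas Y) # ?c" and v = ?b]) auto
  moreover have "derive_step (lgrammar G) (?a @ Inl (Pas Y) # ?c @ [Inl (Give X Y)] @ ?b)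
      (?a @ Inl (Take Y X) # ?c @ [Inl (Give X Y)] @ ?b)"
    by (rule lstep[OF lprods.take[OF X Y], where u = ?a and v = "?c @ [Inl (Give X Y)] @ ?b"]) auto
  moreover have "derive_step (lgrammar G) (?a @ Inl (Take Y X) # ?c @ [Inl (Give X Y)] @ ?b)
      (?a @ Inl (Take Y X) # ?c @ [Inl (Pas X)] @ ?b)"
    by (rule lstep[OF lprods.release[OF X Y], where u = "?a @ Inl (Take Y X) # ?c" and v = ?b]) auto
  moreover have "derive_step (lgrammar G) (?a @ Inl (Take Y X) # ?c @ [Inl (Pas X)] @ ?b)
      (?a @ Inl (Head Y) # ?c @ [Inl (Pas X)] @ ?b)"
    by (rule lstep[OF lprods.acquire[OF X Y], where u = ?a and v = "?c @ [Inl (Pas X)] @ ?b"]) auto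
  ultimately show ?thesis
    unfolding headed_def by (simp add: converse_rtranclp_into_rtranclp)
qed

lemma append_Cons_longer:
  "length a < length a' \<Longrightarrow> a @ X # b = a' @ X' # b' \<Longrightarrow> \<exists>c. a' = a @ X # c \<and> b = c @ X' # b'"
  by (auto simp: append_eq_append_conv2 Cons_eq_append_conv)

lemma head_move:
  assumes e: "a @ [X] @ b = a' @ [X'] @ b'" and V: "set (a @ [X] @ b) \<subseteq> syms_of G"
  shows "(derive_step (lgrammar G))\<^sup>*\<^sup>* (headed a X b) (headed a' X' b')"
proof (cases "length a" "length a'" rule: linorder_cases)
  case less
  then obtain c where "a' = a @ X # c" "b = c @ X' # b'"
    using append_Cons_longer e by fastforce
  then show ?thesis using jump_right[of X G X' a c b'] V by simp
next
  case equal
  then show ?thesis using e by simp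
next
  case greater
  then obtain c where "a = a' @ X' # c" "b' = c @ X # b"
    using append_Cons_longer[of a' a X' b' X b] e by fastforce
  then show ?thesis using jump_left[of X G X' a' c b] V by simp
qed

lemma check_per_all:
  assumes p: "p \<in> prods_of G" and fin: "finite P'"
  shows "P' \<subseteq> per p \<Longrightarrow> P' \<subseteq> alph_N (u @ v) \<Longrightarrow> F' \<subseteq> forb p \<Longrightarrow>
    (derive_step (lgrammar G))\<^sup>*\<^sup>* (passives u @ [Inl (Check p P' F')] @ passives v)
      (passives u @ [Inl (Check p {} F')] @ passives v)"
  using fin
proof (induction P' rule: finite_induct)
  case (insert B P'')
  have "Pas (Inl B) \<in> alph_N (passives u @ passives v)"
    using insert.prems by (auto simp: alph_N_def)
  then have "derive_step (lgrammar G) (passives u @ [Inl (Check p (insert B P'') F')] @ passives v)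
      (passives u @ [Inl (Check p P'' F')] @ passives v)"
    using insert by (intro lstep[OF lprods.check_per[OF p, of "insert B P''" F' B]]) auto
  with insert show ?case by (auto intro: converse_rtranclp_into_rtranclp)
qed simp

lemma check_forb_all:
  assumes p: "p \<in> prods_of G" and fin: "finite F'"
  shows "F' \<subseteq> forb p \<Longrightarrow> F' \<inter> alph_N (u @ v) = {} \<Longrightarrow>
    (derive_step (lgrammar G))\<^sup>*\<^sup>* (passives u @ [Inl (Check p {} F')] @ passives v)
      (passives u @ [Inl (Check p {} {})] @ passives v)"
  using fin
proof (induction F' rule: finite_induct)
  case (insert C F'')
  have "Pas (Inl C) \<notin> alph_N (passives u @ passives v)"
    using insert.prems by (auto simp: alph_N_def)
  then have "derive_step (lgrammar G) (passives u @ [Inl (Check p {} (insert C F''))] @ passives v)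
      (passives u @ [Inl (Check p {} F'')] @ passives v)"
    using insert by (intro lstep[OF lprods.check_forb[OF p, of "{}" "insert C F''" C]]) auto
  with insert show ?case by (auto intro: converse_rtranclp_into_rtranclp)
qed simp

lemma expand_all:
  assumes p: "p \<in> prods_of G" and x: "rhs p = x"
  shows "i < length x \<Longrightarrow> (derive_step (lgrammar G))\<^sup>*\<^sup>*
      (passives u @ passives (take i x) @ [Inl (Expand p i)] @ passives v)
      (passives u @ passives (butlast x) @ [Inl (Head (last x))] @ passives v)"
proof (induction "length x - Suc i" arbitrary: i)
  case 0
  then have i: "Suc i = length x" by simp
  then have "take i x = butlast x" "x ! i = last x"
    by (metis butlast_conv_take diff_Suc_1, metis diff_Suc_1 last_conv_nth list.size(3) nat.distinct(1))
  with i x show ?case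
    by (intro r_into_rtranclp lstep[OF lprods.expand_last[OF p, of i],
          where u = "passives u @ passives (take i x)" and v = "passives v"]) auto
next
  case (Suc n)
  then have i: "Suc i < length x" by simp
  have "derive_step (lgrammar G) (passives u @ passives (take i x) @ [Inl (Expand p i)] @ passives v)
      (passives u @ passives (take (Suc i) x) @ [Inl (Expand p (Suc i))] @ passives v)"
    using i x by (intro lstep[OF lprods.expand[OF p, of i],
        where u = "passives u @ passives (take i x)" and v = "passives v"]) (auto simp: take_Suc_conv_app_nth)
  with Suc i show ?case by (auto intro: converse_rtranclp_into_rtranclp)
qed

lemma simulate_production:
  assumes G: "random_context_grammar G" and p: "(A, x, Pe, Fo) \<in> prods_of G"
    and per: "Pe \<subseteq> alph_N (u @ v)" and forb: "alph_N (u @ v) \<inter> Fo = {}"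
  shows "(derive_step (lgrammar G))\<^sup>*\<^sup>* (headed u (Inl A) v) (headed (u @ butlast x) (last x) v)"
proof -
  let ?p = "(A, x, Pe, Fo)"
  have wf: "x \<noteq> []" "Pe \<subseteq> nts_of G" "Fo \<subseteq> nts_of G"
    using rcg_prod[OF G p] by simp_all
  moreover have "finite (nts_of G)" using G by (simp add: random_context_grammar_def)
  ultimately have fin: "finite Pe" "finite Fo" using finite_subset by blast+
  have "derive_step (lgrammar G) (headed u (Inl A) v) (passives u @ [Inl (Check ?p Pe Fo)] @ passives v)"
    by (rule lstep[OF lprods.start[OF p], where u = "passives u" and v = "passives v"])
      (auto simp: headed_def)
  also have "(derive_step (lgrammar G))\<^sup>*\<^sup>* \<dots> (passives u @ [Inl (Check ?p {} Fo)] @ passives v)"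
    using check_per_all[OF p fin(1), of u v Fo] per by simp
  also have "(derive_step (lgrammar G))\<^sup>*\<^sup>* \<dots> (passives u @ [Inl (Check ?p {} {})] @ passives v)"
    using check_forb_all[OF p fin(2), of u v] forb by auto
  also have "derive_step (lgrammar G) \<dots> (passives u @ passives (take 0 x) @ [Inl (Expand ?p 0)] @ passives v)"
    by (rule lstep[OF lprods.fire[OF p], where u = "passives u" and v = "passives v"]) auto
  also have "(derive_step (lgrammar G))\<^sup>*\<^sup>* \<dots>
      (passives u @ passives (butlast x) @ [Inl (Head (last x))] @ passives v)"
    using expand_all[OF p, of x 0 u v] wf by simp
  finally show ?thesis by (simp add: headed_def)
qed

lemma passives_to_terminals:
  "set t \<subseteq> tms_of G \<Longrightarrow>
    (derive_step (lgrammar G))\<^sup>*\<^sup>* (pre @ passives (map Inr t) @ post) (pre @ map Inr t @ post)"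
proof (induction t arbitrary: pre)
  case (Cons a t)
  have "derive_step (lgrammar G) (pre @ passives (map Inr (a # t)) @ post)
      ((pre @ [Inr a]) @ passives (map Inr t) @ post)"
    using Cons.prems
    by (intro lstep[OF lprods.term_pas, where u = pre and v = "passives (map Inr t) @ post"]) auto
  with Cons.IH[of "pre @ [Inr a]"] Cons.prems show ?case
    by (auto intro: converse_rtranclp_into_rtranclp)
qed simp

lemma headed_derivation:
  assumes G: "random_context_grammar G" and d: "(derive_step G)\<^sup>*\<^sup>* [Inl (start_of G)] w"
  shows "\<exists>a X b. w = a @ [X] @ b \<and>
    (derive_step (lgrammar G))\<^sup>*\<^sup>* [Inl (Head (Inl (start_of G)))] (headed a X b)"
  using d
proof induction
  case base
  show ?case by (rule exI[of _ "[]"], rule exI[of _ "Inl (start_of G)"]) (simp add: headed_def)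
next
  case (step w w')
  then obtain a X b where ab: "w = a @ [X] @ b"
    and to_w: "(derive_step (lgrammar G))\<^sup>*\<^sup>* [Inl (Head (Inl (start_of G)))] (headed a X b)"
    by blast
  from step.hyps(2) obtain u v A x Pe Fo where p: "(A, x, Pe, Fo) \<in> prods_of G"
    and ww': "w = u @ [Inl A] @ v" "w' = u @ x @ v"
    and per: "Pe \<subseteq> alph_N (u @ v)" and forb: "alph_N (u @ v) \<inter> Fo = {}"
    unfolding derive_step_def by blast
  have "(derive_step (lgrammar G))\<^sup>*\<^sup>* (headed a X b) (headed u (Inl A) v)"
    using head_move ab ww' start_derives_syms[OF G step.hyps(1)] by metis
  also have "(derive_step (lgrammar G))\<^sup>*\<^sup>* \<dots> (headed (u @ butlast x) (last x) v)"
    using simulate_production[OF G p per forb] .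
  finally have "(derive_step (lgrammar G))\<^sup>*\<^sup>* [Inl (Head (Inl (start_of G)))]
      (headed (u @ butlast x) (last x) v)"
    using to_w by simp
  moreover have "w' = (u @ butlast x) @ [last x] @ v"
    using ww' rcg_prod[OF G p] by simp
  ultimately show ?case by blast
qed

lemma lgrammar_complete:
  assumes G: "random_context_grammar G"
  shows "Lang G \<subseteq> Lang (lgrammar G)"
proof
  fix t assume "t \<in> Lang G"
  then have t: "set t \<subseteq> tms_of G" and d: "(derive_step G)\<^sup>*\<^sup>* [Inl (start_of G)] (map Inr t)"
    unfolding Lang_def by auto
  from headed_derivation[OF G d] obtain a X b where e: "map Inr t = a @ [X] @ b"
    and to_headed: "(derive_step (lgrammar G))\<^sup>*\<^sup>* [Inl (Head (Inl (start_of G)))] (headed a X b)"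
    by blast
  from e obtain ta c tb where tt: "t = ta @ c # tb" "a = map Inr ta" "X = Inr c" "b = map Inr tb"
    by (auto simp: map_eq_append_conv)
  have ct: "c \<in> tms_of G" "set ta \<subseteq> tms_of G" "set tb \<subseteq> tms_of G" using t tt by auto
  have "(derive_step (lgrammar G))\<^sup>*\<^sup>* (headed a X b)
      (map Inr ta @ [Inl (Head (Inr c))] @ passives (map Inr tb))"
    using passives_to_terminals[OF ct(2), of "[]"] tt by (simp add: headed_def)
  also have "derive_step (lgrammar G) \<dots> ((map Inr ta @ [Inr c]) @ passives (map Inr tb) @ [])"
    by (rule lstep[OF lprods.term_head[OF ct(1)], where u = "map Inr ta" and v = "passives (map Inr tb)"])
      auto
  also have "(derive_step (lgrammar G))\<^sup>*\<^sup>* \<dots> ((map Inr ta @ [Inr c]) @ map Inr tb @ [])"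
    using passives_to_terminals[OF ct(3)] .
  finally have "(derive_step (lgrammar G))\<^sup>*\<^sup>* [Inl (Head (Inl (start_of G)))] (map Inr t)"
    using to_headed tt by simp
  with t show "t \<in> Lang (lgrammar G)" unfolding Lang_def by simp
qed

theorem corollary4:
  fixes G :: "('n, 't) rcg"
  assumes "random_context_grammar G"
  shows "\<exists>G' :: ('n + nat, 't) rcg.
           random_context_grammar G' \<and> limited G' \<and> Lang G' = Lang G"
proof -
  have rcg: "random_context_grammar (lgrammar G)" using lgrammar_rcg[OF assms] .
  then have "finite (nts_of (lgrammar G))" by (simp add: random_context_grammar_def)
  then obtain f :: "('n,'t) lnt \<Rightarrow> nat" where inj: "inj_on f (nts_of (lgrammar G))"
    using finite_imp_inj_to_nat_seg by blast
  let ?G' = "ren (Inr \<circ> f) (lgrammar G) :: ('n + nat, 't) rcg"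
  have "inj_on (Inr \<circ> f) (nts_of (lgrammar G))" using inj by (simp add: comp_inj_on)
  then have "Lang ?G' = Lang G"
    using Lang_ren[OF rcg] lgrammar_sound lgrammar_complete[OF assms] by blast
  moreover have "random_context_grammar ?G'" using ren_rcg[OF rcg] .
  moreover have "limited ?G'" using ren_limited[OF lgrammar_limited] .
  ultimately show ?thesis by blast
qed

end
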